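(* Fix $0<C<1$ and consider all probability vectors $w=(w_1,\dots,w_k)$ (of any finite length $k$, with $w_i\ge0$ and $\sum_i w_i=1$) satisfying $\sum_i w_i^3=C$. Then the minimum of $\sum_i w_i^4$ over all such vectors is attained by a vector of the form $w_1=\dots=w_{m-1}\ge w_m>0$, where $m$ is the smallest possible length for which a vector of this form satisfies $\sum_i w_i^3=C$. *)

theory Defs
  imports Complex_Main
begin

definition prob_vec :: "real list \<Rightarrow> bool" where
  "prob_vec w \<longleftrightarrow> w \<noteq> [] \<and> (\<forall>x\<in>set w. 0 \<le> x) \<and> sum_list w = 1"

definition pow_sum :: "nat \<Rightarrow> real list \<Rightarrow> real" where
  "pow_sum p w = sum_list (map (\<lambda>x. x ^ p) w)"

definition step_form :: "real list \<Rightarrow> bool" where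
  "step_form w \<longleftrightarrow> w \<noteq> [] \<and>
     (\<forall>i < length w - 1. w ! i = w ! 0) \<and>
     w ! 0 \<ge> last w \<and> last w > 0"

end

theory Submission
  imports Defs "HOL-Analysis.Analysis"
begin

text \<open>
  For vectors of a fixed length the constraint set is compact, so a minimiser exists. At a
  minimiser at most one entry lies strictly between 0 and the maximal entry: otherwise the
  maximal entry and two such entries x > y \<ge> z > 0 can be replaced by the roots of
  (t-x)(t-y)(t-z) + d(x+y+z-t) for small d > 0. This keeps the elementary symmetric function
  e1, lowers e2 by d and e3 by d e1, hence by Newton's identities keeps the third power sum and
  lowers the fourth by 2d(2 e2 - d). So the minimiser is a step vector. A step probability
  vector is determined by its cube sum: with j repeated entries the cube sum is strictly
  monotone in the repeated entry and ranges over [1/(j+1)^2, 1/j^2), and these ranges are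
  disjoint. Hence all step vectors with cube sum C coincide, and this vector is the minimiser.
\<close>

lemma sum_cubes_elementary:
  fixes a b c :: real
  shows "a^3 + b^3 + c^3 = (a+b+c)^3 - 3*(a+b+c)*(a*b+b*c+c*a) + 3*(a*b*c)"
  by algebra

lemma sum_fourth_powers_elementary:
  fixes a b c :: real
  shows "a^4 + b^4 + c^4
    = (a+b+c)^4 - 4*(a+b+c)^2*(a*b+b*c+c*a) + 2*(a*b+b*c+c*a)^2 + 4*(a+b+c)*(a*b*c)"
  by algebra

lemma cubic_distinct_roots_vieta:
  fixes r1 r2 r3 s e p :: real
  assumes "r1 < r2" "r2 < r3"
    and "\<And>t. t \<in> {r1, r2, r3} \<Longrightarrow> t^3 - s*t^2 + e*t - p = 0"
  shows "r1+r2+r3 = s" "r1*r2+r2*r3+r3*r1 = e" "r1*r2*r3 = p"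
proof -
  have quad: "a^2+a*b+b^2 - s*(a+b) + e = 0"
    if "a \<in> {r1, r2, r3}" "b \<in> {r1, r2, r3}" "a \<noteq> b" for a b
  proof -
    have "(a - b) * (a^2+a*b+b^2 - s*(a+b) + e) = (a^3 - s*a^2 + e*a - p) - (b^3 - s*b^2 + e*b - p)"
      by algebra
    also have "\<dots> = 0" using assms(3)[OF that(1)] assms(3)[OF that(2)] by simp
    finally show ?thesis using that(3) by simp
  qed
  have q12: "r1^2+r1*r2+r2^2 - s*(r1+r2) + e = 0" and q13: "r1^2+r1*r3+r3^2 - s*(r1+r3) + e = 0"
    using quad assms(1,2) by auto
  have "(r2 - r3) * (r1+r2+r3 - s) = (r1^2+r1*r2+r2^2 - s*(r1+r2) + e) - (r1^2+r1*r3+r3^2 - s*(r1+r3) + e)"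
    by algebra
  with q12 q13 assms(2) show sum: "r1+r2+r3 = s" by simp
  have "e = s*(r1+r2) - (r1^2+r1*r2+r2^2)" using q12 by linarith
  also have "\<dots> = r1*r2+r2*r3+r3*r1" unfolding sum[symmetric] by algebra
  finally show e: "r1*r2+r2*r3+r3*r1 = e" by simp
  have "p = r1^3 - s*r1^2 + e*r1" using assms(3)[of r1] by simp
  also have "\<dots> = r1*r2*r3" unfolding sum[symmetric] e[symmetric] by algebra
  finally show "r1*r2*r3 = p" by simp
qed

lemma perturbed_cubic_nonneg_roots:
  fixes x y z :: real
  assumes xy: "y < x" and yz: "z \<le> y" and z: "0 < z"
  obtains d r1 r2 r3 where "0 < d" "d < 2*(x*y+y*z+z*x)" "0 \<le> r1" "r1 < r2" "r2 < r3"
    "\<And>t. t \<in> {r1, r2, r3} \<Longrightarrow> (t-x)*(t-y)*(t-z) + d*(x+y+z-t) = 0"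
proof -
  define s where "s = x+y+z"
  define m where "m = (x+y)/2"
  define slack where "slack = ((x-y)^2/4) * (m-z) / (s-m)"
  define d where "d = min (min (x*y*z/(2 * s)) (slack/2)) (x*y+y*z+z*x)"
  define Q where "Q t = (t-x)*(t-y)*(t-z) + d*(s-t)" for t
  \<comment> \<open>\<open>Q\<close> is negative at \<open>0\<close> and \<open>m\<close> and positive at \<open>y\<close> and \<open>s\<close>; the bounds on \<open>d\<close> secure the
    signs at \<open>0\<close> and \<open>m\<close>.\<close>
  have y: "0 < y" and x: "0 < x" using assms by linarith+
  have s: "0 < s" "y < s" "m < s" unfolding s_def m_def using x y z by (simp_all add: field_simps)
  have m: "y < m" "z < m" unfolding m_def using xy yz by (simp_all add: field_simps)
  have slack: "0 < slack" unfolding slack_def using xy m s by simp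
  have e: "0 < x*y+y*z+z*x" using x y z by (simp add: add_pos_pos)
  have d: "0 < d" unfolding d_def using x y z s slack e by simp
  have "d * s < x*y*z"
  proof -
    have "d \<le> x*y*z/(2 * s)" unfolding d_def by linarith
    then have "d * s \<le> x*y*z/2" using s by (simp add: field_simps)
    moreover have "0 < x*y*z" using x y z by simp
    ultimately show ?thesis by linarith
  qed
  then have Q0: "Q 0 < 0" unfolding Q_def by simp
  have Qy: "0 < Q y" unfolding Q_def using d s by simp
  have "d*(s-m) < ((x-y)^2/4)*(m-z)"
  proof -
    have "d < slack" unfolding d_def using slack by linarith
    then have "d*(s-m) < slack*(s-m)" using s by simp
    also have "slack*(s-m) = ((x-y)^2/4)*(m-z)" unfolding slack_def using s(3) by (simp add: field_simps)
    finally show ?thesis .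
  qed
  moreover have "(m-x)*(m-y)*(m-z) = -((x-y)^2/4)*(m-z)"
    unfolding m_def by (simp add: power2_eq_square field_simps)
  ultimately have Qm: "Q m < 0" unfolding Q_def by linarith
  have Qs: "0 < Q s" unfolding Q_def s_def using x y z by (simp add: add_pos_pos)
  have cont: "continuous_on S Q" for S unfolding Q_def by (intro continuous_intros)
  obtain r1 where r1: "0 \<le> r1" "r1 \<le> y" "Q r1 = 0"
    using IVT'[of Q 0 0 y] Q0 Qy y cont by force
  obtain r2 where r2: "y \<le> r2" "r2 \<le> m" "Q r2 = 0"
    using IVT2'[of Q m 0 y] Qm Qy m cont by force
  obtain r3 where r3: "m \<le> r3" "r3 \<le> s" "Q r3 = 0"
    using IVT'[of Q m 0 s] Qm Qs s cont by force
  have "r1 \<noteq> y" "r2 \<noteq> y" "r2 \<noteq> m" "r3 \<noteq> m" using r1 r2 r3 Qy Qm by auto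
  then have "r1 < r2" "r2 < r3" using r1 r2 r3 by linarith+
  moreover have "d < 2*(x*y+y*z+z*x)" using e unfolding d_def by (simp add: min.strict_coboundedI2)
  moreover have "(t-x)*(t-y)*(t-z) + d*(x+y+z-t) = 0" if "t \<in> {r1, r2, r3}" for t
    using that r1 r2 r3 unfolding Q_def s_def by blast
  ultimately show thesis using that d r1(1) by blast
qed

lemma three_point_improvement:
  fixes x y z :: real
  assumes "y < x" "z \<le> y" "0 < z"
  obtains a b c where "0 \<le> a" "0 \<le> b" "0 \<le> c" "a+b+c = x+y+z"
    "a^3+b^3+c^3 = x^3+y^3+z^3" "a^4+b^4+c^4 < x^4+y^4+z^4"
proof -
  define s where "s = x+y+z"
  define e where "e = x*y+y*z+z*x"
  define p where "p = x*y*z"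
  obtain d r1 r2 r3 where d: "0 < d" "d < 2*e" and r: "0 \<le> r1" "r1 < r2" "r2 < r3"
    and root: "\<And>t. t \<in> {r1, r2, r3} \<Longrightarrow> (t-x)*(t-y)*(t-z) + d*(x+y+z-t) = 0"
    using perturbed_cubic_nonneg_roots[OF assms] unfolding e_def by blast
  have "t^3 - s*t^2 + (e-d)*t - (p - d * s) = (t-x)*(t-y)*(t-z) + d*(x+y+z-t)" for t
    unfolding s_def e_def p_def by algebra
  then have vieta: "r1+r2+r3 = s" "r1*r2+r2*r3+r3*r1 = e - d" "r1*r2*r3 = p - d * s"
    using cubic_distinct_roots_vieta[OF r(2,3), of s "e-d" "p - d * s"] root by simp_all
  have "r1^3+r2^3+r3^3 = s^3 - 3 * s * (e-d) + 3*(p - d * s)"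
    using sum_cubes_elementary[of r1 r2 r3] unfolding vieta .
  also have "\<dots> = x^3+y^3+z^3"
    using sum_cubes_elementary[of x y z] unfolding s_def e_def p_def by (simp add: algebra_simps)
  finally have cubes: "r1^3+r2^3+r3^3 = x^3+y^3+z^3" .
  have "r1^4+r2^4+r3^4 = s^4 - 4 * s^2 * (e-d) + 2*(e-d)^2 + 4 * s * (p - d * s)"
    using sum_fourth_powers_elementary[of r1 r2 r3] unfolding vieta .
  also have "\<dots> = x^4+y^4+z^4 - 2*d*(2*e - d)"
    using sum_fourth_powers_elementary[of x y z] unfolding s_def e_def p_def
    by (simp add: algebra_simps power2_eq_square)
  also have "\<dots> < x^4+y^4+z^4" using d by simp
  finally have "r1^4+r2^4+r3^4 < x^4+y^4+z^4" .
  with cubes vieta(1) r show thesis using that[of r1 r2 r3] unfolding s_def by simp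
qed

lemma step_form_iff_replicate:
  "step_form v \<longleftrightarrow> (\<exists>j a b. v = replicate j a @ [b] \<and> 0 < b \<and> b \<le> a)"
proof
  assume sf: "step_form v"
  then have ne: "v \<noteq> []" and const: "\<forall>i < length v - 1. v ! i = v ! 0"
    and "last v \<le> v ! 0" "0 < last v"
    unfolding step_form_def by blast+
  have "butlast v = replicate (length v - 1) (v ! 0)"
  proof (rule replicate_eqI)
    fix y assume "y \<in> set (butlast v)"
    then obtain i where "i < length v - 1" "y = v ! i"
      by (auto simp: in_set_conv_nth nth_butlast)
    then show "y = v ! 0" using const by blast
  qed simp
  then have "v = replicate (length v - 1) (v ! 0) @ [last v]"
    using append_butlast_last_id[OF ne] by metis
  with \<open>last v \<le> v ! 0\<close> \<open>0 < last v\<close> show "\<exists>j a b. v = replicate j a @ [b] \<and> 0 < b \<and> b \<le> a"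
    by blast
next
  assume "\<exists>j a b. v = replicate j a @ [b] \<and> 0 < b \<and> b \<le> a"
  then obtain j a b where "v = replicate j a @ [b]" "0 < b" "b \<le> a" by blast
  then show "step_form v"
    unfolding step_form_def by (cases j) (auto simp: nth_append nth_Cons')
qed

lemma pow_sum_replicate_snoc [simp]:
  "pow_sum p (replicate j a @ [b]) = real j * a^p + b^p"
  by (simp add: pow_sum_def sum_list_replicate)

lemma step_form_prob_vec_iff: "step_form v \<Longrightarrow> prob_vec v \<longleftrightarrow> sum_list v = 1"
  unfolding prob_vec_def step_form_iff_replicate by auto

lemma cube_sum_step_less:
  fixes a b a' b' :: real
  assumes "0 < j" "real j * a + b = 1" "real j * a' + b' = 1" "b \<le> a" "a < a'" "0 \<le> b'"
  shows "real j * a^3 + b^3 < real j * a'^3 + b'^3"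
proof -
  have b: "b = 1 - real j * a" and b': "b' = 1 - real j * a'" using assms(2,3) by linarith+
  have "b' < b" unfolding b b' using assms(1,5) by simp
  have "real j * a'^3 + b'^3 - (real j * a^3 + b^3)
      = real j * (a' - a) * ((a'^2 + a'*a + a^2) - (b'^2 + b'*b + b^2))"
    unfolding b b' by algebra
  moreover have "b^2 < a'^2" "b'*b \<le> a'*a" "b'^2 \<le> a^2"
    using assms(4-6) \<open>b' < b\<close> by (auto intro!: power_strict_mono mult_mono power_mono)
  then have "0 < (a'^2 + a'*a + a^2) - (b'^2 + b'*b + b^2)" by linarith
  ultimately show ?thesis using assms(1,5) by (smt (verit) mult_pos_pos of_nat_0_less_iff)
qed

lemma cube_sum_uniform:
  "real j * (1 / (real j + 1))^3 + (1 / (real j + 1))^3 = 1 / (real j + 1)^2"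
proof -
  let ?u = "1 / (real j + 1)"
  have "real j * ?u^3 + ?u^3 = ?u^2 * (real j * ?u + ?u)" by algebra
  also have "real j * ?u + ?u = 1" by (simp add: field_simps)
  finally show ?thesis by (simp add: power_one_over)
qed

lemma cube_sum_step_bounds:
  fixes a b :: real
  assumes "0 < j" "real j * a + b = 1" "0 < b" "b \<le> a"
  shows "1 / (real j + 1)^2 \<le> real j * a^3 + b^3" "real j * a^3 + b^3 < 1 / (real j)^2"
proof -
  let ?lo = "1 / (real j + 1)" and ?hi = "1 / real j"
  have lo: "real j * ?lo + ?lo = 1" by (simp add: field_simps)
  have "?lo \<le> a"
  proof -
    have "1 \<le> (real j + 1) * a" using assms(2,4) by (simp add: algebra_simps)
    then show ?thesis by (simp add: field_simps)
  qed
  then consider "a = ?lo" | "?lo < a" by linarith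
  then show "1 / (real j + 1)^2 \<le> real j * a^3 + b^3"
  proof cases
    case 1
    then have "b = ?lo" using assms(2) lo by simp
    with 1 cube_sum_uniform show ?thesis by simp
  next
    case 2
    from cube_sum_step_less[OF assms(1) lo assms(2) _ 2] assms(3) cube_sum_uniform
    show ?thesis by simp
  qed
  have hi: "real j * ?hi + 0 = 1" using assms(1) by simp
  have "a < ?hi" using assms(1-3) by (simp add: field_simps)
  moreover have "real j * ?hi^3 + 0^3 = 1 / (real j)^2"
    using assms(1) by (simp add: power2_eq_square power3_eq_cube)
  ultimately show "real j * a^3 + b^3 < 1 / (real j)^2"
    using cube_sum_step_less[OF assms(1,2) hi assms(4)] by simp
qed

lemma cube_sum_step_index_less:
  fixes a b c d :: real
  assumes "j < k" "real j * a + b = 1" "0 < b" "b \<le> a" "real k * c + d = 1" "0 < d" "d \<le> c"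
  shows "real k * c^3 + d^3 < real j * a^3 + b^3"
proof -
  have "0 < k" using assms(1) by simp
  have "real k * c^3 + d^3 < 1 / (real k)^2"
    using cube_sum_step_bounds(2)[OF \<open>0 < k\<close> assms(5-7)] .
  also have "\<dots> \<le> 1 / (real j + 1)^2"
    using assms(1) by (intro divide_left_mono power_mono) auto
  also have "\<dots> \<le> real j * a^3 + b^3"
  proof (cases "j = 0")
    case True
    then show ?thesis using assms(2) by simp
  next
    case False
    then show ?thesis using cube_sum_step_bounds(1)[OF _ assms(2-4)] by simp
  qed
  finally show ?thesis .
qed

lemma step_form_prob_vec_unique:
  assumes "prob_vec v" "step_form v" "prob_vec w" "step_form w" "pow_sum 3 v = pow_sum 3 w"
  shows "v = w"
proof -
  obtain j a b where v: "v = replicate j a @ [b]" "0 < b" "b \<le> a"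
    using assms(2) step_form_iff_replicate by blast
  obtain k c d where w: "w = replicate k c @ [d]" "0 < d" "d \<le> c"
    using assms(4) step_form_iff_replicate by blast
  have sum_v: "real j * a + b = 1" and sum_w: "real k * c + d = 1"
    using assms(1,3) unfolding v w prob_vec_def by (simp_all add: sum_list_replicate)
  have cubes: "real j * a^3 + b^3 = real k * c^3 + d^3" using assms(5) unfolding v w by simp
  have "j = k"
  proof (rule ccontr)
    assume "j \<noteq> k"
    then consider "j < k" | "k < j" by linarith
    then show False
      using cube_sum_step_index_less[OF _ sum_v v(2,3) sum_w w(2,3)]
        cube_sum_step_index_less[OF _ sum_w w(2,3) sum_v v(2,3)] cubes
      by cases auto
  qed
  show ?thesis
  proof (cases "j = 0")
    case True
    then show ?thesis using \<open>j = k\<close> sum_v sum_w unfolding v w by simp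
  next
    case False
    have "a = c"
    proof (rule ccontr)
      assume "a \<noteq> c"
      then consider "a < c" | "c < a" by linarith
      then show False
        using cube_sum_step_less[of j a b c d] cube_sum_step_less[of j c d a b]
          False \<open>j = k\<close> sum_v sum_w v(2,3) w(2,3) cubes
        by cases auto
    qed
    then show ?thesis using \<open>j = k\<close> sum_v sum_w unfolding v w by simp
  qed
qed

lemma cube_level_bracket:
  fixes C :: real
  assumes "0 < C" "C < 1"
  obtains j :: nat where "0 < j" "1 / (real j + 1)^2 \<le> C" "C < 1 / (real j)^2"
proof -
  define t where "t = 1 / sqrt C"
  have "1 < t" unfolding t_def using assms by simp
  define j where "j = nat (\<lceil>t\<rceil> - 1)"
  have j: "real j < t" "t \<le> real j + 1" unfolding j_def using \<open>1 < t\<close> by linarith+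
  have C: "C = 1 / t^2" unfolding t_def using assms by (simp add: power_one_over)
  have "0 < j" using j \<open>1 < t\<close> by linarith
  moreover have "1 / (real j + 1)^2 \<le> C"
    unfolding C using j \<open>1 < t\<close> by (intro divide_left_mono power_mono) auto
  moreover have "C < 1 / (real j)^2"
    unfolding C using j \<open>0 < j\<close> by (intro divide_strict_left_mono power_strict_mono) auto
  ultimately show thesis using that by blast
qed

lemma exists_step_form_cube_sum:
  fixes C :: real
  assumes "0 < C" "C < 1"
  obtains w where "prob_vec w" "step_form w" "pow_sum 3 w = C"
proof -
  obtain j where j: "0 < j" "1 / (real j + 1)^2 \<le> C" "C < 1 / (real j)^2"
    using cube_level_bracket[OF assms] .
  define g where "g a = real j * a^3 + (1 - real j * a)^3" for a
  let ?lo = "1 / (real j + 1)" and ?hi = "1 / real j"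
  have "1 - real j * ?lo = ?lo" by (simp add: field_simps)
  then have "g ?lo \<le> C" using j(2) cube_sum_uniform[of j] unfolding g_def by simp
  moreover have "C < g ?hi" using j(1,3) unfolding g_def by (simp add: power2_eq_square power3_eq_cube)
  moreover have "?lo \<le> ?hi" using j(1) by (simp add: frac_le)
  moreover have "continuous_on {?lo..?hi} g" unfolding g_def by (intro continuous_intros)
  ultimately obtain a where a: "?lo \<le> a" "a \<le> ?hi" "g a = C"
    using IVT'[of g ?lo C ?hi] by auto
  define b where "b = 1 - real j * a"
  have "a \<noteq> ?hi" using a \<open>C < g ?hi\<close> by auto
  then have "real j * a < 1" using a(2) j(1) by (simp add: field_simps)
  then have "0 < b" unfolding b_def by simp
  moreover have "b \<le> a" unfolding b_def using a(1) by (simp add: field_simps)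
  ultimately have step: "step_form (replicate j a @ [b])"
    using step_form_iff_replicate by blast
  moreover have "prob_vec (replicate j a @ [b])"
    using step_form_prob_vec_iff[OF step] by (simp add: sum_list_replicate b_def)
  moreover have "pow_sum 3 (replicate j a @ [b]) = C" using a(3) unfolding g_def b_def by simp
  ultimately show thesis using that by blast
qed

text \<open>Vectors in \<open>\<real>\<^sup>n\<close> are modelled as functions \<open>nat \<Rightarrow> real\<close> vanishing from \<open>n\<close> on, so that
  the product topology on \<open>nat \<Rightarrow> real\<close> is available for the compactness argument.\<close>

definition cube_slice :: "nat \<Rightarrow> real \<Rightarrow> (nat \<Rightarrow> real) set" where
  "cube_slice n C = {f. (\<forall>i<n. 0 \<le> f i) \<and> (\<forall>i\<ge>n. f i = 0) \<and> (\<Sum>i<n. f i) = 1 \<and> (\<Sum>i<n. f i ^ 3) = C}"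

lemma compact_cube_slice: "compact (cube_slice n C)"
proof -
  define S where "S i = (if i < n then {0..1::real} else {0})" for i
  have "compactin (product_topology (\<lambda>i. euclidean) UNIV) (PiE UNIV S)"
    unfolding compactin_PiE by (auto simp: S_def)
  then have "compact (PiE UNIV S)" by (simp add: euclidean_product_topology)
  moreover have "closed (cube_slice n C)"
    unfolding cube_slice_def
    by (intro closed_Collect_conj closed_Collect_all closed_Collect_imp open_Collect_const
        closed_Collect_le closed_Collect_eq continuous_intros continuous_on_id
        continuous_on_product_then_coordinatewise)
  moreover have "cube_slice n C \<subseteq> PiE UNIV S"
  proof
    fix f assume "f \<in> cube_slice n C"
    then have nonneg: "\<forall>i<n. 0 \<le> f i" and "\<forall>i\<ge>n. f i = 0" and "(\<Sum>i<n. f i) = 1"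
      unfolding cube_slice_def by auto
    moreover have "f i \<le> (\<Sum>i<n. f i)" if "i < n" for i
      using nonneg that by (intro member_le_sum) auto
    ultimately show "f \<in> PiE UNIV S" by (auto simp: S_def not_less)
  qed
  ultimately show ?thesis by (metis compact_Int_closed inf.absorb_iff2)
qed

lemma cube_slice_has_minimizer:
  assumes "cube_slice n C \<noteq> {}"
  obtains u where "u \<in> cube_slice n C" "\<And>f. f \<in> cube_slice n C \<Longrightarrow> (\<Sum>i<n. u i ^ 4) \<le> (\<Sum>i<n. f i ^ 4)"
proof -
  have "continuous_on (cube_slice n C) (\<lambda>f. \<Sum>i<n. f i ^ 4)"
    by (intro continuous_intros continuous_on_id continuous_on_product_then_coordinatewise)
  then show thesis
    using continuous_attains_inf[OF compact_cube_slice assms] that by blast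
qed

lemma sum_update_three:
  fixes g :: "'b \<Rightarrow> 'c::ab_group_add" and f :: "'a \<Rightarrow> 'b"
  assumes "finite I" "i0 \<in> I" "i1 \<in> I" "i2 \<in> I" "i0 \<noteq> i1" "i0 \<noteq> i2" "i1 \<noteq> i2"
  shows "(\<Sum>i\<in>I. g ((f(i0 := a, i1 := b, i2 := c)) i))
    = (\<Sum>i\<in>I. g (f i)) - g (f i0) - g (f i1) - g (f i2) + g a + g b + g c"
proof -
  have split: "(\<Sum>i\<in>I. h i) = (\<Sum>i\<in>I - {i0, i1, i2}. h i) + h i0 + h i1 + h i2" for h :: "'a \<Rightarrow> 'c"
    using sum.subset_diff[of "{i0, i1, i2}" I h] assms by (simp add: algebra_simps)
  have "(\<Sum>i\<in>I - {i0, i1, i2}. g ((f(i0 := a, i1 := b, i2 := c)) i)) = (\<Sum>i\<in>I - {i0, i1, i2}. g (f i))"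
    by (rule sum.cong) auto
  then show ?thesis
    using split[of "\<lambda>i. g ((f(i0 := a, i1 := b, i2 := c)) i)"] split[of "\<lambda>i. g (f i)"] assms(5-7)
    by (simp add: algebra_simps)
qed

lemma cube_slice_minimizer_intermediate_unique:
  assumes u: "u \<in> cube_slice n C"
    and min: "\<And>f. f \<in> cube_slice n C \<Longrightarrow> (\<Sum>i<n. u i ^ 4) \<le> (\<Sum>i<n. f i ^ 4)"
    and "i0 < n" "i1 < n" "i2 < n"
    and "0 < u i1" "u i1 < u i0" "0 < u i2" "u i2 < u i0"
  shows "i1 = i2"
proof -
  have no_pair: False if hyps: "i1 < n" "i2 < n" "i1 \<noteq> i2" "0 < u i2" "u i2 \<le> u i1" "u i1 < u i0" for i1 i2
  proof -
    obtain a b c where abc: "0 \<le> a" "0 \<le> b" "0 \<le> c" "a+b+c = u i0 + u i1 + u i2"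
      "a^3+b^3+c^3 = u i0^3 + u i1^3 + u i2^3" "a^4+b^4+c^4 < u i0^4 + u i1^4 + u i2^4"
      by (rule three_point_improvement[OF hyps(6,5,4)])
    define f where "f = u(i0 := a, i1 := b, i2 := c)"
    have sums: "(\<Sum>i<n. g (f i)) = (\<Sum>i<n. g (u i)) - g (u i0) - g (u i1) - g (u i2) + g a + g b + g c"
      for g :: "real \<Rightarrow> real"
      unfolding f_def using hyps \<open>i0 < n\<close> by (intro sum_update_three) auto
    have "f \<in> cube_slice n C"
      unfolding cube_slice_def
    proof (intro CollectI conjI allI impI)
      show "0 \<le> f i" if "i < n" for i using u abc that unfolding f_def cube_slice_def by auto
      show "f i = 0" if "n \<le> i" for i
        using u hyps \<open>i0 < n\<close> that unfolding f_def cube_slice_def by auto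
      show "(\<Sum>i<n. f i) = 1" using sums[of "\<lambda>x. x"] u abc(4) unfolding cube_slice_def by simp
      show "(\<Sum>i<n. f i ^ 3) = C" using sums[of "\<lambda>x. x^3"] u abc(5) unfolding cube_slice_def by simp
    qed
    moreover have "(\<Sum>i<n. f i ^ 4) < (\<Sum>i<n. u i ^ 4)" using sums[of "\<lambda>x. x^4"] abc by simp
    ultimately show False using min by fastforce
  qed
  show ?thesis
    using no_pair[of i1 i2] no_pair[of i2 i1] assms(4-9) by (cases "u i2 \<le> u i1") auto
qed

lemma exists_step_form_same_power_sums:
  fixes u :: "nat \<Rightarrow> real"
  assumes range: "\<And>i. i < n \<Longrightarrow> 0 \<le> u i \<and> u i \<le> M" and "i0 < n" "u i0 = M" "0 < M"
    and single: "\<And>i k. \<lbrakk>i < n; k < n; 0 < u i; u i < M; 0 < u k; u k < M\<rbrakk> \<Longrightarrow> i = k"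
  obtains v where "step_form v" "\<And>p. 0 < p \<Longrightarrow> pow_sum p v = (\<Sum>i<n. u i ^ p)"
proof -
  define T where "T = {i. i < n \<and> u i = M}"
  define R where "R = {i. i < n \<and> 0 < u i \<and> u i < M}"
  have fin: "finite T" "finite R" unfolding T_def R_def by simp_all
  have "i0 \<in> T" unfolding T_def using assms(2,3) by simp
  then have "0 < card T" using fin(1) card_gt_0_iff by blast
  have sums: "(\<Sum>i<n. u i ^ p) = real (card T) * M ^ p + (\<Sum>i\<in>R. u i ^ p)" if "0 < p" for p
  proof -
    have "(\<Sum>i<n. u i ^ p) = (\<Sum>i\<in>T \<union> R. u i ^ p)"
    proof (rule sum.mono_neutral_right)
      show "\<forall>i\<in>{..<n} - (T \<union> R). u i ^ p = 0"
        using range that unfolding T_def R_def by force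
    qed (auto simp: T_def R_def)
    also have "\<dots> = (\<Sum>i\<in>T. u i ^ p) + (\<Sum>i\<in>R. u i ^ p)"
      using fin by (intro sum.union_disjoint) (auto simp: T_def R_def)
    also have "(\<Sum>i\<in>T. u i ^ p) = real (card T) * M ^ p" unfolding T_def by simp
    finally show ?thesis .
  qed
  have "R \<subseteq> {r}" if "r \<in> R" for r using single that unfolding R_def by blast
  then consider "R = {}" | r where "R = {r}" "0 < u r" "u r < M"
    unfolding R_def by blast
  then show thesis
  proof cases
    case 1
    let ?v = "replicate (card T - 1) M @ [M]"
    have "step_form ?v" using \<open>0 < M\<close> step_form_iff_replicate by blast
    moreover have "pow_sum p ?v = (\<Sum>i<n. u i ^ p)" if "0 < p" for p
      using sums[OF that] 1 \<open>0 < card T\<close> by (simp add: of_nat_diff algebra_simps)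
    ultimately show thesis using that by blast
  next
    case 2
    let ?v = "replicate (card T) M @ [u r]"
    have "step_form ?v" using 2 step_form_iff_replicate by force
    moreover have "pow_sum p ?v = (\<Sum>i<n. u i ^ p)" if "0 < p" for p
      using sums[OF that] 2 by simp
    ultimately show thesis using that by blast
  qed
qed

lemma cube_slice_minimizer_step_form:
  assumes u: "u \<in> cube_slice n C"
    and min: "\<And>f. f \<in> cube_slice n C \<Longrightarrow> (\<Sum>i<n. u i ^ 4) \<le> (\<Sum>i<n. f i ^ 4)"
    and "0 < n"
  obtains v where "prob_vec v" "step_form v" "pow_sum 3 v = C" "pow_sum 4 v = (\<Sum>i<n. u i ^ 4)"
proof -
  define M where "M = Max (u ` {..<n})"
  have le_M: "u i \<le> M" if "i < n" for i unfolding M_def using that by simp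
  obtain i0 where i0: "i0 < n" "u i0 = M"
  proof -
    have "M \<in> u ` {..<n}" unfolding M_def using \<open>0 < n\<close> by (intro Max_in) auto
    then show thesis using that by auto
  qed
  have nonneg: "0 \<le> u i" if "i < n" for i using u that unfolding cube_slice_def by simp
  have "0 < M"
  proof (rule ccontr)
    assume "\<not> 0 < M"
    then have "(\<Sum>i<n. u i) \<le> 0" by (intro sum_nonpos) (meson le_M lessThan_iff not_less order_trans)
    then show False using u unfolding cube_slice_def by simp
  qed
  obtain v where v: "step_form v" "\<And>p. 0 < p \<Longrightarrow> pow_sum p v = (\<Sum>i<n. u i ^ p)"
  proof (rule exists_step_form_same_power_sums[of n u M i0])
    show "0 \<le> u i \<and> u i \<le> M" if "i < n" for i using nonneg le_M that by simp
    show "i = k" if "i < n" "k < n" "0 < u i" "u i < M" "0 < u k" "u k < M" for i k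
      using cube_slice_minimizer_intermediate_unique[OF u min i0(1) that(1,2)] that i0(2) by simp
  qed (use i0 \<open>0 < M\<close> in auto)
  have "sum_list v = 1"
    using v(2)[of 1] u unfolding pow_sum_def cube_slice_def by simp
  then have "prob_vec v" using step_form_prob_vec_iff v(1) by blast
  moreover have "pow_sum 3 v = C" using v(2)[of 3] u unfolding cube_slice_def by simp
  ultimately show thesis using that v by simp
qed

lemma pow_sum_eq_sum_nth: "pow_sum p v = (\<Sum>i<length v. (v ! i) ^ p)"
  unfolding pow_sum_def by (simp add: sum_list_sum_nth atLeast0LessThan)

lemma prob_vec_in_cube_slice:
  assumes "prob_vec v" "pow_sum 3 v = C"
  shows "(\<lambda>i. if i < length v then v ! i else 0) \<in> cube_slice (length v) C"
proof -
  have "(\<Sum>i<length v. (if i < length v then v ! i else 0) ^ p) = pow_sum p v" for p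
    unfolding pow_sum_eq_sum_nth by simp
  from this[of 1] this[of 3] show ?thesis
    using assms unfolding cube_slice_def prob_vec_def pow_sum_def by auto
qed

lemma step_form_minimizes_pow_sum_4:
  assumes w: "prob_vec w" "step_form w"
    and v: "prob_vec v" "pow_sum 3 v = pow_sum 3 w"
  shows "pow_sum 4 w \<le> pow_sum 4 v"
proof -
  let ?n = "length v" and ?f = "\<lambda>i. if i < length v then v ! i else 0"
  have f: "?f \<in> cube_slice ?n (pow_sum 3 w)" using prob_vec_in_cube_slice[OF v] .
  then obtain u where u: "u \<in> cube_slice ?n (pow_sum 3 w)"
    and min: "\<And>g. g \<in> cube_slice ?n (pow_sum 3 w) \<Longrightarrow> (\<Sum>i<?n. u i ^ 4) \<le> (\<Sum>i<?n. g i ^ 4)"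
    using cube_slice_has_minimizer by blast
  obtain v' where v': "prob_vec v'" "step_form v'" "pow_sum 3 v' = pow_sum 3 w"
    "pow_sum 4 v' = (\<Sum>i<?n. u i ^ 4)"
    using cube_slice_minimizer_step_form[OF u min] v(1) unfolding prob_vec_def by blast
  have "v' = w" using step_form_prob_vec_unique[OF v'(1,2) w] v'(3) by simp
  then have "pow_sum 4 w = (\<Sum>i<?n. u i ^ 4)" using v'(4) by simp
  also have "\<dots> \<le> (\<Sum>i<?n. ?f i ^ 4)" using min[OF f] .
  also have "\<dots> = pow_sum 4 v" unfolding pow_sum_eq_sum_nth by simp
  finally show ?thesis .
qed

theorem lemma2p7:
  fixes C :: real
  assumes "0 < C" and "C < 1"
  shows "\<exists>w. prob_vec w \<and> step_form w \<and> pow_sum 3 w = C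
           \<and> (\<forall>v. prob_vec v \<and> step_form v \<and> pow_sum 3 v = C \<longrightarrow> length w \<le> length v)
           \<and> (\<forall>v. prob_vec v \<and> pow_sum 3 v = C \<longrightarrow> pow_sum 4 w \<le> pow_sum 4 v)"
proof -
  obtain w where w: "prob_vec w" "step_form w" "pow_sum 3 w = C"
    using exists_step_form_cube_sum[OF assms] .
  have "length w \<le> length v" if "prob_vec v" "step_form v" "pow_sum 3 v = C" for v
    using step_form_prob_vec_unique[OF that(1,2) w(1,2)] that(3) w(3) by simp
  moreover have "pow_sum 4 w \<le> pow_sum 4 v" if "prob_vec v" "pow_sum 3 v = C" for v
    using step_form_minimizes_pow_sum_4[OF w(1,2) that(1)] that(2) w(3) by simp
  ultimately show ?thesis using w by blast
qed

end
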